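(* Let $a,b,c$ be signed indices (each a positive integer, possibly barred) with $|a|+|b|+|c|=w\ge 4$. If $(a,b)\ne(1,1)$ (with both unbarred), then $\zeta_\sqcup(a,b,c)=\zeta_*(a,b,c)$. Further, if $c=w-2$ or $c=\overline{w-2}$, then $$\zeta_\sqcup(1,1,c)=\zeta_*(1,1,c)+\tfrac12\zeta(2)\zeta(c).$$
   Context: Signed indices: a positive integer $s$ or a barred one $\bar s$, with $|s|=|\bar s|=s$. For signed indices, $\zeta(s_1,\dots,s_d)$ denotes the Euler sum $\sum_{n_1>\dots>n_d>0}\frac{z_1^{n_1}\cdots z_d^{n_d}}{n_1^{|s_1|}\cdots n_d^{|s_d|}}$ with $z_j=-1$ if $s_j$ is barred and $z_j=1$ otherwise; it converges iff $s_1\ne 1$ (unbarred). Regularized values: the truncated sum $\zeta^{(M)}$ (same sum restricted to $M\ge n_1$) has, as $M\to\infty$, an expansion $P(\log M+\gamma)+o(1)$ with $P$ a polynomial ($\gamma$ Euler's constant); $\zeta_*:=P(T)\in\mathbb{R}[T]$. With $a_k=\prod_{j\le k}z_j$, the iterated integral $\int_0^{1-\varepsilon}\left(\frac{dt}{t}\right)^{|s_1|-1}\frac{dt}{a_1-t}\cdots\left(\frac{dt}{t}\right)^{|s_d|-1}\frac{dt}{a_d-t}$ (over $1-\varepsilon>t_1>t_2>\dots>0$, forms read left to right) has, as $\varepsilon\to0^+$, an expansion $Q(-\log\varepsilon)+o(1)$ with $Q$ a polynomial; $\zeta_\sqcup:=Q(T)$. Both equal the Euler sum for convergent indices. *)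

theory Defs
  imports "HOL-Analysis.Analysis" "HOL-Computational_Algebra.Polynomial"
begin

text \<open>A signed index is a pair (s, barred) with s a positive integer;
  barred = True means the index is barred. |(s,b)| = s.\<close>
type_synonym sidx = "nat \<times> bool"

definition sidx_ok :: "sidx \<Rightarrow> bool" where
  "sidx_ok s \<longleftrightarrow> fst s \<ge> 1"

definition zsgn :: "sidx \<Rightarrow> real" where
  "zsgn s = (if snd s then -1 else 1)"

text \<open>Truncated Euler sum: sum over M >= n1 > n2 > ... > nd > 0.\<close>
fun zeta_trunc :: "sidx list \<Rightarrow> nat \<Rightarrow> real" where
  "zeta_trunc [] M = 1"
| "zeta_trunc (s # ss) M =
     (\<Sum>n=1..M. zsgn s ^ n / real n ^ fst s * zeta_trunc ss (n - 1))"

definition euler_sum :: "sidx list \<Rightarrow> real" where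
  "euler_sum ss = lim (\<lambda>M. zeta_trunc ss M)"

definition zeta_star :: "sidx list \<Rightarrow> real poly" where
  "zeta_star ss = (THE P. ((\<lambda>M. zeta_trunc ss M - poly P (ln (real M) + euler_mascheroni))
                           \<longlongrightarrow> 0) sequentially)"

text \<open>Iterated integral over x > t1 > t2 > ... > 0 of forms f1(t1)dt1 ... (read left to right).\<close>
fun iter_int :: "(real \<Rightarrow> real) list \<Rightarrow> real \<Rightarrow> real" where
  "iter_int [] x = 1"
| "iter_int (f # fs) x = integral {0..x} (\<lambda>t. f t * iter_int fs t)"

text \<open>The list of forms (dt/t)^(|s1|-1) dt/(a1-t) ... (dt/t)^(|sd|-1) dt/(ad-t),
  a_k = z_1 ... z_k; the argument a is the running product.\<close>
fun forms_aux :: "real \<Rightarrow> sidx list \<Rightarrow> (real \<Rightarrow> real) list" where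
  "forms_aux a [] = []"
| "forms_aux a (s # ss) =
     replicate (fst s - 1) (\<lambda>t. 1 / t) @ [(\<lambda>t. 1 / (a * zsgn s - t))] @ forms_aux (a * zsgn s) ss"

definition forms :: "sidx list \<Rightarrow> (real \<Rightarrow> real) list" where
  "forms ss = forms_aux 1 ss"

definition zeta_sh :: "sidx list \<Rightarrow> real poly" where
  "zeta_sh ss = (THE Q. ((\<lambda>\<epsilon>. iter_int (forms ss) (1 - \<epsilon>) - poly Q (- ln \<epsilon>))
                          \<longlongrightarrow> 0) (at_right 0))"

end

theory Submission
  imports Defs
begin

(*
  Both regularisations are read off from the asymptotics of the truncated sums zeta_N(k).
  Expanding each form dt / (a - t) geometrically gives the generating function identity
    iter_int (forms k) x = (1 - x) * (sum_N zeta_N(k) x^N),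
  so at x = 1 - eps the iterated integral is the Abel mean eps * sum_N zeta_N(k) (1 - eps)^N.

  In depth three, zeta_N(k) = kappa * zeta_N(1,1) + j * zeta_N(1) + D_N with D_N convergent,
  where kappa = 0 unless (a, b) = (1, 1), and kappa = zeta(c) in that case.  The convergent
  part has the same limit as its Abel mean, and zeta_N(1) = H_N is regularised to T on both
  sides.  The only discrepancy comes from zeta_N(1,1) = (H_N^2 - zeta_N(2)) / 2: the
  integral gives (log eps)^2 / 2, hence T^2 / 2, whereas H_N^2 = (log N + gamma)^2 + o(1)
  gives (T^2 - zeta(2)) / 2; this is the correction kappa * zeta(2) / 2.

  The remainders D_N are shown to converge with error O(1 / sqrt N), a bound that survives
  each of the summations sum_n z^n / n^s * (...) building up the truncated sums.
*)

section \<open>Power series on the unit disc\<close>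

lemma one_le_conv_radius_iff:
  fixes f :: "nat \<Rightarrow> real"
  shows "1 \<le> conv_radius f \<longleftrightarrow> (\<forall>x. \<bar>x\<bar> < 1 \<longrightarrow> summable (\<lambda>n. f n * x ^ n))"
  using le_conv_radius_iff[of 1 f 0] by (simp add: one_ereal_def)

lemma conv_radius_ge_if_norm_le:
  fixes f g :: "nat \<Rightarrow> 'a::{banach, real_normed_div_algebra}"
  assumes "\<And>n. norm (g n) \<le> norm (f n)"
  shows "conv_radius f \<le> conv_radius g"
proof (rule conv_radius_geI_ex')
  fix r :: real assume "0 < r" "ereal r < conv_radius f"
  then have "summable (\<lambda>n. norm (f n * of_real r ^ n))"
    by (intro abs_summable_in_conv_radius) simp
  then show "summable (\<lambda>n. g n * of_real r ^ n)"
    by (rule summable_comparison_test'[where N = 0])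
       (use assms in \<open>auto simp: norm_mult intro!: mult_right_mono\<close>)
qed

lemma powser_partial_sums_sums:
  fixes f :: "nat \<Rightarrow> real"
  assumes "1 \<le> conv_radius f" "\<bar>x\<bar> < 1"
  shows "(\<lambda>N. (\<Sum>n\<le>N. f n) * x ^ N) sums ((\<Sum>n. f n * x ^ n) / (1 - x))"
proof -
  have "ereal (norm x) < 1"
    using assms(2) by (simp add: one_ereal_def)
  also note assms(1)
  finally have "ereal (norm x) < conv_radius f" .
  then have "summable (\<lambda>n. norm (f n * x ^ n))"
    by (rule abs_summable_in_conv_radius)
  moreover have "summable (\<lambda>n. norm (x ^ n))"
    using assms by (simp add: power_abs summable_geometric)
  ultimately have "(\<lambda>N. \<Sum>n\<le>N. f n * x ^ n * x ^ (N - n)) sums ((\<Sum>n. f n * x ^ n) * (\<Sum>n. x ^ n))"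
    by (rule Cauchy_product_sums)
  moreover have "(\<Sum>n\<le>N. f n * x ^ n * x ^ (N - n)) = (\<Sum>n\<le>N. f n) * x ^ N" for N
    by (simp add: sum_distrib_right mult.assoc flip: power_add)
  ultimately show ?thesis
    using assms by (simp add: suminf_geometric divide_inverse)
qed

lemma one_le_conv_radius_partial_sums:
  fixes f :: "nat \<Rightarrow> real"
  assumes "1 \<le> conv_radius f"
  shows "1 \<le> conv_radius (\<lambda>N. \<Sum>n\<le>N. f n)"
  using powser_partial_sums_sums[OF assms] sums_summable
  unfolding one_le_conv_radius_iff by blast

lemma conv_radius_le_divide_power_index:
  fixes f :: "nat \<Rightarrow> real"
  shows "conv_radius f \<le> conv_radius (\<lambda>n. f n / real n ^ j)"
proof (rule conv_radius_ge_if_norm_le)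
  fix n
  show "norm (f n / real n ^ j) \<le> norm (f n)"
    by (cases "n = 0") (simp_all add: abs_divide divide_le_eq mult_le_cancel_left1 power_0_left)
qed

lemma has_real_derivative_powser:
  fixes h :: "nat \<Rightarrow> real"
  assumes "1 \<le> conv_radius h" "\<bar>t\<bar> < 1"
  shows "((\<lambda>t. \<Sum>n. h n * t ^ n) has_real_derivative (\<Sum>n. diffs h n * t ^ n)) (at t)"
  by (rule termdiffs_strong'[where K = 1]) (use assms in \<open>auto simp: one_le_conv_radius_iff\<close>)

lemma integral_eq_powser_antiderivative:
  fixes h :: "nat \<Rightarrow> real"
  assumes "1 \<le> conv_radius h" "0 \<le> x" "x < 1"
    and "\<And>t. 0 < t \<Longrightarrow> t < x \<Longrightarrow> g t = (\<Sum>n. diffs h n * t ^ n)"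
  shows "integral {0..x} g = (\<Sum>n. h n * x ^ n) - h 0"
proof -
  let ?H = "\<lambda>t. \<Sum>n. h n * t ^ n"
  have deriv: "(?H has_real_derivative (\<Sum>n. diffs h n * t ^ n)) (at t)" if "0 \<le> t" "t \<le> x" for t
    using has_real_derivative_powser[OF assms(1)] that assms(3) by simp
  have "(g has_integral (?H x - ?H 0)) {0..x}"
  proof (rule fundamental_theorem_of_calculus_interior)
    show "continuous_on {0..x} ?H"
      using deriv by (intro continuous_at_imp_continuous_on ballI DERIV_isCont) auto
    show "(?H has_vector_derivative g t) (at t)" if "t \<in> {0<..<x}" for t
      using deriv[of t] assms(4)[of t] that by (simp add: has_real_derivative_iff_has_vector_derivative)
  qed (use assms in auto)
  then show ?thesis by (simp add: integral_unique)
qed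

lemma conv_radius_le_antiderivative_coeffs:
  fixes c :: "nat \<Rightarrow> real"
  shows "conv_radius c \<le> conv_radius (\<lambda>n. c (n - 1) / real n)"
proof -
  have "conv_radius c \<le> conv_radius (\<lambda>n. c n / real (n + 1))"
    by (rule conv_radius_ge_if_norm_le) (simp add: abs_divide divide_le_eq mult_le_cancel_left1)
  also have "\<dots> = conv_radius (\<lambda>n. c (n - 1) / real n)"
    using conv_radius_shift[of "\<lambda>n. c (n - 1) / real n" 1] by simp
  finally show ?thesis .
qed

lemma integral_powser:
  fixes c :: "nat \<Rightarrow> real"
  assumes "1 \<le> conv_radius c" "0 \<le> x" "x < 1"
  shows "integral {0..x} (\<lambda>t. \<Sum>n. c n * t ^ n) = (\<Sum>n. c (n - 1) / real n * x ^ n)"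
proof -
  have "diffs (\<lambda>n. c (n - 1) / real n) = c"
    by (simp add: diffs_def fun_eq_iff del: of_nat_Suc)
  then show ?thesis
    using integral_eq_powser_antiderivative[of "\<lambda>n. c (n - 1) / real n" x]
      order.trans[OF assms(1) conv_radius_le_antiderivative_coeffs] assms(2,3)
    by simp
qed

lemma integral_inverse_times_powser:
  fixes f :: "nat \<Rightarrow> real"
  assumes "1 \<le> conv_radius f" "f 0 = 0" "0 \<le> x" "x < 1"
  shows "integral {0..x} (\<lambda>t. 1 / t * (\<Sum>n. f n * t ^ n)) = (\<Sum>n. f n / real n * x ^ n)"
proof -
  have radius: "1 \<le> conv_radius (\<lambda>n. f n / real n)"
    using order.trans[OF assms(1) conv_radius_le_divide_power_index[of f 1]] by simp
  have "1 / t * (\<Sum>n. f n * t ^ n) = (\<Sum>n. diffs (\<lambda>n. f n / real n) n * t ^ n)"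
    if "0 < t" "t < x" for t
  proof -
    have "summable (\<lambda>n. f n * t ^ n)"
      using assms that by (simp add: one_le_conv_radius_iff)
    have "(\<Sum>n. f n * t ^ n) = (\<Sum>n. f (Suc n) * t ^ n) * t"
      using powser_split_head(1)[OF \<open>summable (\<lambda>n. f n * t ^ n)\<close>] assms(2) by simp
    then show ?thesis
      using that by (simp add: diffs_def del: of_nat_Suc)
  qed
  then show ?thesis
    using integral_eq_powser_antiderivative[OF radius assms(3,4)] by simp
qed

lemma iter_int_replicate_inverse:
  fixes g :: "nat \<Rightarrow> real"
  assumes "\<And>t. 0 \<le> t \<Longrightarrow> t < 1 \<Longrightarrow> iter_int fs t = (\<Sum>n. g n * t ^ n)"
    and "1 \<le> conv_radius g" "g 0 = 0" "0 \<le> x" "x < 1"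
  shows "iter_int (replicate j (\<lambda>t. 1 / t) @ fs) x = (\<Sum>n. g n / real n ^ j * x ^ n)"
  using assms(4,5)
proof (induction j arbitrary: x)
  case 0
  then show ?case using assms(1) by simp
next
  case (Suc j)
  have "iter_int (replicate (Suc j) (\<lambda>t. 1 / t) @ fs) x
      = integral {0..x} (\<lambda>t. 1 / t * (\<Sum>n. g n / real n ^ j * t ^ n))"
    using Suc by (auto intro!: integral_cong)
  also have "\<dots> = (\<Sum>n. g n / real n ^ j / real n * x ^ n)"
    using order.trans[OF assms(2) conv_radius_le_divide_power_index] assms(3) Suc.prems
    by (intro integral_inverse_times_powser) auto
  also have "\<dots> = (\<Sum>n. g n / real n ^ Suc j * x ^ n)"
    by (simp add: mult.commute)
  finally show ?case .
qed

section \<open>Iterated integrals as generating functions of truncated sums\<close>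

lemma abs_zsgn [simp]: "\<bar>zsgn s\<bar> = 1"
  by (simp add: zsgn_def)

lemma abs_zsgn_power [simp]: "\<bar>zsgn s ^ n\<bar> = 1"
  by (simp add: power_abs)

definition zeta_trunc_term :: "sidx \<Rightarrow> sidx list \<Rightarrow> nat \<Rightarrow> real" where
  "zeta_trunc_term s ss n = (if n = 0 then 0 else zsgn s ^ n / real n ^ fst s * zeta_trunc ss (n - 1))"

lemma zeta_trunc_Cons_eq_sum_term: "zeta_trunc (s # ss) N = (\<Sum>n\<le>N. zeta_trunc_term s ss n)"
  by (simp add: zeta_trunc_term_def sum.atMost_shift sum.atLeast1_atMost_eq del: of_nat_Suc)

lemma conv_radius_le_zeta_trunc_term: "conv_radius (zeta_trunc ss) \<le> conv_radius (zeta_trunc_term s ss)"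
proof -
  have "conv_radius (zeta_trunc ss) \<le> conv_radius (\<lambda>n. zeta_trunc_term s ss (n + 1))"
    by (rule conv_radius_ge_if_norm_le)
       (simp add: zeta_trunc_term_def abs_mult abs_divide divide_le_eq mult_le_cancel_left1 one_le_power
         del: of_nat_Suc)
  then show ?thesis
    using conv_radius_shift[of "zeta_trunc_term s ss" 1] by simp
qed

lemma one_le_conv_radius_zeta_trunc: "1 \<le> conv_radius (zeta_trunc ss)"
proof (induction ss)
  case Nil
  then show ?case by (simp add: one_le_conv_radius_iff summable_geometric)
next
  case (Cons s ss)
  have "zeta_trunc (s # ss) = (\<lambda>N. \<Sum>n\<le>N. zeta_trunc_term s ss n)"
    by (rule ext) (rule zeta_trunc_Cons_eq_sum_term)
  then show ?case
    using one_le_conv_radius_partial_sums order.trans[OF Cons.IH conv_radius_le_zeta_trunc_term]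
    by metis
qed

lemma summable_zeta_trunc_powser: "\<bar>x\<bar> < 1 \<Longrightarrow> summable (\<lambda>N. zeta_trunc ss N * x ^ N)"
  using one_le_conv_radius_zeta_trunc by (simp add: one_le_conv_radius_iff)

lemma zeta_trunc_Cons_powser:
  assumes "\<bar>y\<bar> < 1"
  shows "(1 - y) * (\<Sum>N. zeta_trunc (s # ss) N * y ^ N) = (\<Sum>n. zeta_trunc_term s ss n * y ^ n)"
proof -
  have "1 \<le> conv_radius (zeta_trunc_term s ss)"
    using order.trans[OF one_le_conv_radius_zeta_trunc conv_radius_le_zeta_trunc_term] .
  from powser_partial_sums_sums[OF this assms] show ?thesis
    using assms unfolding zeta_trunc_Cons_eq_sum_term by (simp add: sums_iff)
qed

lemma one_le_conv_radius_pole_coeffs: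
  assumes "\<bar>A\<bar> = 1"
  shows "1 \<le> conv_radius (\<lambda>n. A ^ n * zeta_trunc ss (n - 1) / real n)"
proof -
  have "conv_radius (zeta_trunc ss) \<le> conv_radius (\<lambda>n. A ^ (n + 1) * zeta_trunc ss (n + 1 - 1) / real (n + 1))"
    using assms by (intro conv_radius_ge_if_norm_le)
      (simp add: abs_mult power_abs abs_divide divide_le_eq mult_le_cancel_left1 del: of_nat_Suc)
  then show ?thesis
    using one_le_conv_radius_zeta_trunc[of ss] conv_radius_shift[of "\<lambda>n. A ^ n * zeta_trunc ss (n - 1) / real n" 1]
    by simp
qed

lemma iter_int_Cons_pole:
  assumes A: "A = 1 \<or> A = -1" and "0 \<le> t" "t < 1"
    and IH: "\<And>u. 0 \<le> u \<Longrightarrow> u < 1 \<Longrightarrow>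
      iter_int (forms_aux A ss) u = (1 - A * u) * (\<Sum>N. zeta_trunc ss N * (A * u) ^ N)"
  shows "iter_int ((\<lambda>t. 1 / (A - t)) # forms_aux A ss) t = (\<Sum>n. A ^ n * zeta_trunc ss (n - 1) / real n * t ^ n)"
proof -
  define c where "c n = A ^ Suc n * zeta_trunc ss n" for n
  have c_radius: "1 \<le> conv_radius c"
    using order.trans[OF one_le_conv_radius_zeta_trunc conv_radius_ge_if_norm_le[of c "zeta_trunc ss"]] A
    by (auto simp: c_def abs_mult power_abs)
  have "1 / (A - u) * iter_int (forms_aux A ss) u = (\<Sum>n. c n * u ^ n)" if "0 \<le> u" "u \<le> t" for u
  proof -
    have u: "0 \<le> u" "u < 1" "\<bar>A * u\<bar> < 1" using that \<open>t < 1\<close> A by auto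
    have "1 / (A - u) * (1 - A * u) = A"
      using A u by (auto simp: field_simps)
    moreover have "A * (\<Sum>N. zeta_trunc ss N * (A * u) ^ N) = (\<Sum>n. c n * u ^ n)"
      using suminf_mult[OF summable_zeta_trunc_powser[OF u(3)], of A]
      by (simp add: c_def power_mult_distrib mult_ac)
    ultimately show ?thesis
      using IH[OF u(1,2)] by (metis mult.assoc)
  qed
  then have "iter_int ((\<lambda>t. 1 / (A - t)) # forms_aux A ss) t = integral {0..t} (\<lambda>u. \<Sum>n. c n * u ^ n)"
    by (auto intro!: integral_cong)
  also have "\<dots> = (\<Sum>n. c (n - 1) / real n * t ^ n)"
    using c_radius assms(2,3) by (rule integral_powser)
  also have "\<dots> = (\<Sum>n. A ^ n * zeta_trunc ss (n - 1) / real n * t ^ n)"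
  proof (intro suminf_cong)
    fix n
    show "c (n - 1) / real n * t ^ n = A ^ n * zeta_trunc ss (n - 1) / real n * t ^ n"
      by (cases n) (simp_all add: c_def)
  qed
  finally show ?thesis .
qed

lemma iter_int_forms_aux:
  assumes "A = 1 \<or> A = -1" "\<forall>s\<in>set ss. sidx_ok s" "0 \<le> x" "x < 1"
  shows "iter_int (forms_aux A ss) x = (1 - A * x) * (\<Sum>N. zeta_trunc ss N * (A * x) ^ N)"
  using assms
proof (induction ss arbitrary: A x)
  case Nil
  have "\<bar>A * x\<bar> < 1" using Nil.prems by auto
  then show ?case by (simp add: suminf_geometric)
next
  case (Cons s ss)
  define A' where "A' = A * zsgn s"
  have A': "A' = 1 \<or> A' = -1" using Cons.prems(1) by (auto simp: A'_def zsgn_def)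
  have "fst s \<ge> 1" using Cons.prems(2) by (simp add: sidx_ok_def)
  have "iter_int (forms_aux A (s # ss)) x
      = (\<Sum>n. A' ^ n * zeta_trunc ss (n - 1) / real n / real n ^ (fst s - 1) * x ^ n)"
    using iter_int_replicate_inverse[OF iter_int_Cons_pole[OF A'] one_le_conv_radius_pole_coeffs _ Cons.prems(3,4)]
      Cons.IH[OF A'] Cons.prems(2) A'
    by (auto simp: A'_def)
  also have "\<dots> = (\<Sum>n. zeta_trunc_term s ss n * (A * x) ^ n)"
  proof (intro suminf_cong)
    fix n
    have "real n * real n ^ (fst s - 1) = real n ^ fst s"
      using \<open>fst s \<ge> 1\<close> by (metis power_Suc Suc_diff_le diff_Suc_1)
    then show "A' ^ n * zeta_trunc ss (n - 1) / real n / real n ^ (fst s - 1) * x ^ n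
        = zeta_trunc_term s ss n * (A * x) ^ n"
      using \<open>fst s \<ge> 1\<close> by (simp add: zeta_trunc_term_def A'_def power_mult_distrib field_simps)
  qed
  also have "\<dots> = (1 - A * x) * (\<Sum>N. zeta_trunc (s # ss) N * (A * x) ^ N)"
    using Cons.prems(1,3,4) by (intro zeta_trunc_Cons_powser[symmetric]) auto
  finally show ?case .
qed

lemma iter_int_forms:
  assumes "\<forall>s\<in>set ss. sidx_ok s" "0 \<le> x" "x < 1"
  shows "iter_int (forms ss) x = (1 - x) * (\<Sum>N. zeta_trunc ss N * x ^ N)"
  using iter_int_forms_aux[of 1 ss x] assms by (simp add: forms_def)

lemma integral_eq_diff_antiderivative:
  fixes F f :: "real \<Rightarrow> real"
  assumes "a \<le> b" "\<And>t. a \<le> t \<Longrightarrow> t \<le> b \<Longrightarrow> (F has_real_derivative f t) (at t)"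
  shows "integral {a..b} f = F b - F a"
  using assms
  by (intro integral_unique fundamental_theorem_of_calculus)
     (auto simp: has_real_derivative_iff_has_vector_derivative intro: has_vector_derivative_at_within)

lemma forms_one: "forms [(1, False)] = [\<lambda>t. 1 / (1 - t)]"
  by (simp add: forms_def zsgn_def)

lemma forms_one_one: "forms [(1, False), (1, False)] = [\<lambda>t. 1 / (1 - t), \<lambda>t. 1 / (1 - t)]"
  by (simp add: forms_def zsgn_def)

lemma iter_int_forms_one:
  assumes "0 \<le> x" "x < 1"
  shows "iter_int (forms [(1, False)]) x = - ln (1 - x)"
proof -
  have "iter_int (forms [(1, False)]) x = integral {0..x} (\<lambda>t. 1 / (1 - t))"
    unfolding forms_one by simp
  also have "\<dots> = - ln (1 - x) - - ln (1 - 0)"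
    using assms by (intro integral_eq_diff_antiderivative) (auto intro!: derivative_eq_intros)
  finally show ?thesis by simp
qed

lemma iter_int_forms_one_one:
  assumes "0 \<le> x" "x < 1"
  shows "iter_int (forms [(1, False), (1, False)]) x = (ln (1 - x))\<^sup>2 / 2"
proof -
  have "iter_int (forms [(1, False), (1, False)]) x
      = integral {0..x} (\<lambda>t. 1 / (1 - t) * iter_int (forms [(1, False)]) t)"
    unfolding forms_one forms_one_one by simp
  also have "\<dots> = integral {0..x} (\<lambda>t. 1 / (1 - t) * - ln (1 - t))"
    by (intro integral_cong) (use assms iter_int_forms_one in auto)
  also have "\<dots> = (ln (1 - x))\<^sup>2 / 2 - (ln (1 - 0))\<^sup>2 / 2"
  proof (rule integral_eq_diff_antiderivative)
    fix t :: real assume "0 \<le> t" "t \<le> x"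
    then have "t < 1" using assms by simp
    then show "((\<lambda>t. (ln (1 - t))\<^sup>2 / 2) has_real_derivative 1 / (1 - t) * - ln (1 - t)) (at t)"
      by (auto intro!: derivative_eq_intros simp: field_simps)
  qed (use assms in auto)
  finally show ?thesis by simp
qed

section \<open>Abel means\<close>

lemma abs_Abel_mean_le:
  fixes u :: "nat \<Rightarrow> real"
  assumes B: "\<And>N. \<bar>u N\<bar> \<le> B" and r: "\<And>N. N \<ge> N0 \<Longrightarrow> \<bar>u N\<bar> \<le> r" and e: "0 < e" "e < 1"
  shows "\<bar>e * (\<Sum>N. u N * (1 - e) ^ N)\<bar> \<le> e * (B * N0) + r"
proof -
  define x where "x = 1 - e"
  have x: "0 \<le> x" "x < 1" using e by (auto simp: x_def)
  define b where "b N = (if N < N0 then B else 0) + r * x ^ N" for N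
  have "(\<lambda>N. if N < N0 then B else 0) sums (B * N0)"
    using sums_If_finite_set[of "{..<N0}" "\<lambda>_. B"] by (simp add: mult.commute)
  moreover have "(\<lambda>N. r * x ^ N) sums (r / e)"
    using sums_mult[OF geometric_sums[of x], of r] x by (simp add: x_def)
  ultimately have b_sums: "b sums (B * N0 + r / e)"
    unfolding b_def by (rule sums_add)
  have u_le_b: "norm (u N * x ^ N) \<le> b N" for N
  proof (cases "N < N0")
    case True
    have "\<bar>u N\<bar> * x ^ N \<le> B * 1" using B[of N] x by (intro mult_mono power_le_one) auto
    moreover have "0 \<le> r * x ^ N" using r[of N0] x by simp
    ultimately show ?thesis using True x by (simp add: b_def abs_mult)
  next
    case False
    have "\<bar>u N\<bar> * x ^ N \<le> r * x ^ N"
      using r[of N] False x by (intro mult_right_mono) auto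
    then show ?thesis using False x by (simp add: b_def abs_mult)
  qed
  have "summable (\<lambda>N. norm (u N * x ^ N))"
    using u_le_b by (intro summable_comparison_test'[OF sums_summable[OF b_sums]]) auto
  then have "\<bar>\<Sum>N. u N * x ^ N\<bar> \<le> (\<Sum>N. norm (u N * x ^ N))"
    using summable_norm by fastforce
  also have "\<dots> \<le> B * N0 + r / e"
    using suminf_le[OF u_le_b \<open>summable (\<lambda>N. norm (u N * x ^ N))\<close> sums_summable[OF b_sums]] b_sums
    by (simp add: sums_iff)
  finally have "e * \<bar>\<Sum>N. u N * x ^ N\<bar> \<le> e * (B * N0 + r / e)"
    using e by (intro mult_left_mono) auto
  then show ?thesis using e by (simp add: x_def abs_mult distrib_left)
qed

lemma Abel_mean_null:
  fixes u :: "nat \<Rightarrow> real"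
  assumes "u \<longlonglongrightarrow> 0"
  shows "((\<lambda>e. e * (\<Sum>N. u N * (1 - e) ^ N)) \<longlongrightarrow> 0) (at_right 0)"
proof (rule tendstoI)
  fix r :: real assume "r > 0"
  then obtain N0 where N0: "\<And>N. N \<ge> N0 \<Longrightarrow> \<bar>u N\<bar> \<le> r / 2"
    using LIMSEQ_D[OF assms, of "r / 2"] by (auto intro: less_imp_le)
  obtain B where B: "B > 0" "\<And>N. \<bar>u N\<bar> \<le> B"
    using convergent_imp_Bseq[of u] assms by (auto simp: Bseq_def convergent_def)
  define \<delta> where "\<delta> = min 1 (r / (2 * (B * N0 + 1)))"
  have "\<delta> > 0" using \<open>r > 0\<close> B by (simp add: \<delta>_def add_nonneg_pos)
  moreover have "\<bar>e * (\<Sum>N. u N * (1 - e) ^ N)\<bar> < r" if "0 < e" "e < \<delta>" for e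
  proof -
    have "e * (2 * (B * N0 + 1)) < r"
      using that B by (simp add: \<delta>_def pos_less_divide_eq add_nonneg_pos)
    then have "e * (B * N0) < r / 2" using that by (simp add: algebra_simps)
    moreover have "\<bar>e * (\<Sum>N. u N * (1 - e) ^ N)\<bar> \<le> e * (B * N0) + r / 2"
      using that by (intro abs_Abel_mean_le[of u B N0 "r / 2" e] B(2) N0) (auto simp: \<delta>_def)
    ultimately show ?thesis by linarith
  qed
  ultimately show "\<forall>\<^sub>F e in at_right 0. dist (e * (\<Sum>N. u N * (1 - e) ^ N)) 0 < r"
    unfolding eventually_at_right_field by auto
qed

lemma Abel_mean_tendsto:
  fixes D :: "nat \<Rightarrow> real"
  assumes "D \<longlonglongrightarrow> d"
  shows "((\<lambda>e. e * (\<Sum>N. D N * (1 - e) ^ N)) \<longlongrightarrow> d) (at_right 0)"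
proof -
  have "Bseq (\<lambda>N. D N - d)"
    using assms by (intro convergent_imp_Bseq convergent_diff convergent_const) (auto simp: convergent_def)
  then obtain B where B: "\<And>N. \<bar>D N - d\<bar> \<le> B"
    by (auto simp: Bseq_def)
  have "e * (\<Sum>N. (D N - d) * (1 - e) ^ N) + d = e * (\<Sum>N. D N * (1 - e) ^ N)"
    if e: "0 < e" "e < 1" for e
  proof -
    define x where "x = 1 - e"
    have x: "0 \<le> x" "x < 1" using e by (auto simp: x_def)
    have "summable (\<lambda>N. B * x ^ N)"
      using x by (intro summable_mult summable_geometric) auto
    moreover have "norm ((D N - d) * x ^ N) \<le> B * x ^ N" for N
      using B[of N] x by (simp add: abs_mult mult_right_mono)
    ultimately have "summable (\<lambda>N. (D N - d) * x ^ N)"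
      by (blast intro: summable_comparison_test')
    moreover have "(\<lambda>N. d * x ^ N) sums (d / e)"
      using sums_mult[OF geometric_sums[of x], of d] x by (simp add: x_def)
    ultimately have "(\<lambda>N. (D N - d) * x ^ N + d * x ^ N) sums ((\<Sum>N. (D N - d) * x ^ N) + d / e)"
      by (intro sums_add summable_sums)
    then have "(\<lambda>N. D N * x ^ N) sums ((\<Sum>N. (D N - d) * x ^ N) + d / e)"
      by (simp add: left_diff_distrib)
    then show ?thesis
      using e by (simp add: sums_iff distrib_left x_def)
  qed
  then have "\<forall>\<^sub>F e in at_right 0. e * (\<Sum>N. (D N - d) * (1 - e) ^ N) + d = e * (\<Sum>N. D N * (1 - e) ^ N)"
    unfolding eventually_at_right_field by (intro exI[of _ 1]) auto
  moreover have "((\<lambda>e. e * (\<Sum>N. (D N - d) * (1 - e) ^ N) + d) \<longlongrightarrow> 0 + d) (at_right 0)"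
    using assms by (intro tendsto_add Abel_mean_null tendsto_const) (simp add: LIM_zero)
  ultimately show ?thesis
    by (simp add: Lim_transform_eventually)
qed

section \<open>Uniqueness of the regularised values\<close>

lemma poly_eq_0_if_tendsto_0:
  fixes p :: "real poly"
  assumes "filterlim f at_top F" "F \<noteq> bot" "((\<lambda>x. poly p (f x)) \<longlongrightarrow> 0) F"
  shows "p = 0"
proof (cases "degree p = 0")
  case True
  then obtain c where "p = [:c:]" by (meson degree_eq_zeroE)
  with assms(2,3) show ?thesis by (simp add: tendsto_const_iff)
next
  case False
  have "filterlim (\<lambda>x. poly p (f x)) at_infinity F"
    using filterlim_compose[OF filterlim_poly_at_infinity filterlim_at_top_imp_at_infinity[OF assms(1)]] False
    by simp
  with assms(2,3) show ?thesis using not_tendsto_and_filterlim_at_infinity by blast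
qed

lemma filterlim_ln_plus_euler_mascheroni: "filterlim (\<lambda>M. ln (real M) + euler_mascheroni) at_top sequentially"
proof -
  have "filterlim (\<lambda>M. euler_mascheroni + ln (real M)) at_top sequentially"
    by (intro filterlim_tendsto_add_at_top[OF tendsto_const] filterlim_compose[OF ln_at_top filterlim_real_sequentially])
  then show ?thesis by (simp add: add.commute)
qed

lemma zeta_star_eqI:
  assumes "((\<lambda>M. zeta_trunc ss M - poly P (ln (real M) + euler_mascheroni)) \<longlongrightarrow> 0) sequentially"
  shows "zeta_star ss = P"
  unfolding zeta_star_def
proof (rule the_equality)
  fix P' assume "((\<lambda>M. zeta_trunc ss M - poly P' (ln (real M) + euler_mascheroni)) \<longlongrightarrow> 0) sequentially"
  from tendsto_diff[OF assms this]
  have lim: "((\<lambda>M. poly (P' - P) (ln (real M) + euler_mascheroni)) \<longlongrightarrow> 0) sequentially"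
    by (simp add: algebra_simps)
  have "P' - P = 0"
    using poly_eq_0_if_tendsto_0[OF filterlim_ln_plus_euler_mascheroni _ lim] by simp
  then show "P' = P" by simp
qed (fact assms)

lemma zeta_sh_eqI:
  assumes "((\<lambda>\<epsilon>. iter_int (forms ss) (1 - \<epsilon>) - poly Q (- ln \<epsilon>)) \<longlongrightarrow> 0) (at_right 0)"
  shows "zeta_sh ss = Q"
  unfolding zeta_sh_def
proof (rule the_equality)
  fix Q' assume "((\<lambda>\<epsilon>. iter_int (forms ss) (1 - \<epsilon>) - poly Q' (- ln \<epsilon>)) \<longlongrightarrow> 0) (at_right 0)"
  from tendsto_diff[OF assms this]
  have "((\<lambda>\<epsilon>. poly (Q' - Q) (- ln \<epsilon>)) \<longlongrightarrow> 0) (at_right 0)"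
    by (simp add: algebra_simps)
  moreover have "filterlim (\<lambda>\<epsilon>::real. - ln \<epsilon>) at_top (at_right 0)"
    using ln_at_0 by (simp add: filterlim_uminus_at_top)
  ultimately show "Q' = Q"
    using poly_eq_0_if_tendsto_0 by fastforce
qed (fact assms)

section \<open>Harmonic numbers\<close>

lemma harm_le_ln_plus_one: "n \<ge> 1 \<Longrightarrow> harm n \<le> ln (real n) + (1::real)"
  using euler_mascheroni_sequence_decreasing[of 1 n] by (simp add: harm_def)

lemma harm_le_root4: "harm n \<le> 4 * sqrt (sqrt (real n) :: real)"
proof (cases "n = 0")
  case False
  define y where "y = sqrt (sqrt (real n))"
  have "y > 0" using False by (simp add: y_def)
  have "y ^ 4 = real n" by (simp add: y_def numeral_eq_Suc power_Suc mult.assoc[symmetric])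
  then have "ln (real n) = 4 * ln y" using \<open>y > 0\<close> by (metis ln_realpow of_nat_numeral)
  moreover have "ln y \<le> y - 1" using \<open>y > 0\<close> by (rule ln_le_minus_one)
  ultimately show ?thesis using harm_le_ln_plus_one[of n] False unfolding y_def by simp
qed (simp add: harm_def)

lemma harm_le_sqrt: "harm n \<le> 4 * sqrt (real n + 1 :: real)"
proof -
  have "sqrt (real n) \<le> sqrt ((real n + 1)\<^sup>2)"
    by (rule real_sqrt_le_mono) (simp add: power2_eq_square algebra_simps)
  then have "sqrt (sqrt (real n)) \<le> sqrt (real n + 1)"
    by (intro real_sqrt_le_mono) simp
  then show ?thesis using harm_le_root4[of n] by linarith
qed

lemma harm_squared_le_sqrt: "(harm n)\<^sup>2 \<le> 16 * sqrt (real n + 1 :: real)"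
proof -
  have "(harm n)\<^sup>2 \<le> (4 * sqrt (sqrt (real n)))\<^sup>2"
    using harm_le_root4[of n] harm_nonneg[of n] by (intro power_mono) auto
  also have "\<dots> \<le> 16 * sqrt (real n + 1)"
    by (simp add: power_mult_distrib)
  finally show ?thesis .
qed

lemma harm_divide_Suc_le:
  assumes "m \<ge> 2"
  shows "harm m / real (Suc m) \<le> harm (m - 1) / (real m :: real)"
proof -
  define h where "h = (harm (m - 1) :: real)"
  have "harm 1 \<le> h" using assms by (simp add: h_def harm_mono)
  moreover have "harm 1 = (1 :: real)" by (simp add: harm_def)
  ultimately have "1 \<le> h" by simp
  have m: "real m > 0" using assms by simp
  have harm_m: "harm m = h + 1 / real m"
    using harm_Suc[of "m - 1"] assms by (simp add: h_def inverse_eq_divide)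
  have "harm m / real (Suc m) = (h * real m + 1) / (real m * (real m + 1))"
    unfolding harm_m using m by (simp add: field_simps)
  also have "\<dots> \<le> (h * real m + h) / (real m * (real m + 1))"
    using \<open>1 \<le> h\<close> m by (intro divide_right_mono) auto
  also have "\<dots> = (h * (real m + 1)) / (real m * (real m + 1))"
    by (simp add: algebra_simps)
  also have "\<dots> = h / real m"
    using m by (intro mult_divide_mult_cancel_right) auto
  finally show ?thesis by (simp add: h_def)
qed

lemma abs_harm_minus_ln_le:
  assumes "n \<ge> 1"
  shows "\<bar>harm n - (ln (real n) + euler_mascheroni)\<bar> \<le> 2 / real n"
proof -
  have "ln (real (Suc n)) - ln (real n) = ln (real (Suc n) / real n)"
    using assms by (simp add: ln_div)
  also have "\<dots> = ln (1 + 1 / real n)"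
    using assms by (simp add: field_simps)
  also have "\<dots> \<le> 1 / real n" by (rule ln_add_one_self_le_self) simp
  finally have "ln (real (Suc n)) - ln (real n) \<le> 1 / real n" .
  moreover have "0 \<le> ln (real (Suc n)) - ln (real n)" using assms by simp
  moreover have "inverse (real (2 * n)) \<le> 1 / real n" using assms by (simp add: field_simps)
  moreover have "1 / real n \<le> 2 / real n" using assms by (simp add: divide_right_mono)
  ultimately show ?thesis
    using euler_mascheroni_bounds[OF assms] inverse_nonnegative_iff_nonnegative[of "real (2 * (n + 1))"]
    unfolding atLeastAtMost_iff abs_le_iff by linarith
qed

lemma harm_minus_ln_LIMSEQ: "(\<lambda>n. harm n - (ln (real n) + euler_mascheroni)) \<longlonglongrightarrow> (0 :: real)"
  using tendsto_diff[OF euler_mascheroni_LIMSEQ tendsto_const[of euler_mascheroni]]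
  by (simp add: algebra_simps)

lemma harm_squared_minus_ln_squared_LIMSEQ:
  "(\<lambda>n. (harm n)\<^sup>2 - (ln (real n) + euler_mascheroni)\<^sup>2) \<longlonglongrightarrow> (0 :: real)"
proof (rule Lim_null_comparison)
  define g where "g n = 4 * (1 + euler_mascheroni) * (1 / real n) + 4 * (ln (real n) / real n)" for n
  have "g \<longlonglongrightarrow> 4 * (1 + euler_mascheroni) * 0 + 4 * 0"
    unfolding g_def by (intro tendsto_intros lim_const_over_n lim_ln_over_n)
  then show "g \<longlonglongrightarrow> 0" by simp
  show "\<forall>\<^sub>F n in sequentially. norm ((harm n)\<^sup>2 - (ln (real n) + euler_mascheroni)\<^sup>2) \<le> g n"
    unfolding eventually_sequentially
  proof (intro exI[of _ 1] allI impI)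
    fix n :: nat assume "n \<ge> 1"
    define H L where "H = (harm n :: real)" and "L = ln (real n) + euler_mascheroni"
    have HL: "\<bar>H - L\<bar> \<le> 2 / real n" using abs_harm_minus_ln_le[OF \<open>n \<ge> 1\<close>] by (simp add: H_def L_def)
    have "0 \<le> L" using \<open>n \<ge> 1\<close> euler_mascheroni_pos by (simp add: L_def)
    moreover have "2 / real n \<le> 2" using \<open>n \<ge> 1\<close> by (simp add: divide_le_eq)
    ultimately have "\<bar>H + L\<bar> \<le> 2 + 2 * L" using HL by linarith
    have "\<bar>H\<^sup>2 - L\<^sup>2\<bar> = \<bar>H - L\<bar> * \<bar>H + L\<bar>"
      by (simp add: power2_eq_square algebra_simps flip: abs_mult)
    also have "\<dots> \<le> 2 / real n * (2 + 2 * L)"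
      using HL \<open>\<bar>H + L\<bar> \<le> 2 + 2 * L\<close> by (intro mult_mono) auto
    also have "\<dots> = g n" by (simp add: g_def L_def algebra_simps add_divide_distrib)
    finally show "norm ((harm n)\<^sup>2 - (ln (real n) + euler_mascheroni)\<^sup>2) \<le> g n"
      by (simp add: H_def L_def)
  qed
qed

section \<open>Convergence with error O(1 / sqrt n)\<close>

(* Convergence of K alone does not make sum_n (K (n - 1) - kappa) / n converge; the rate does. *)
definition converges_sqrt_rate :: "(nat \<Rightarrow> real) \<Rightarrow> real \<Rightarrow> bool" where
  "converges_sqrt_rate S \<sigma> \<longleftrightarrow> (\<exists>C. \<forall>n. \<bar>S n - \<sigma>\<bar> \<le> C / sqrt (real n + 1))"

lemma tendsto_divide_sqrt_Suc: "(\<lambda>n. C / sqrt (real n + 1)) \<longlonglongrightarrow> 0"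
proof -
  have "filterlim (\<lambda>n. 1 + real n) at_top sequentially"
    by (rule filterlim_tendsto_add_at_top[OF tendsto_const filterlim_real_sequentially])
  then have "filterlim (\<lambda>n. sqrt (real n + 1)) at_top sequentially"
    by (intro filterlim_compose[OF sqrt_at_top]) (simp add: add.commute)
  then show ?thesis
    by (intro tendsto_divide_0[OF tendsto_const] filterlim_at_top_imp_at_infinity)
qed

lemma converges_sqrt_rate_LIMSEQ: "converges_sqrt_rate S \<sigma> \<Longrightarrow> S \<longlonglongrightarrow> \<sigma>"
proof -
  assume "converges_sqrt_rate S \<sigma>"
  then obtain C where C: "\<And>n. \<bar>S n - \<sigma>\<bar> \<le> C / sqrt (real n + 1)"
    by (auto simp: converges_sqrt_rate_def)
  have "(\<lambda>n. S n - \<sigma>) \<longlonglongrightarrow> 0"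
    by (rule Lim_null_comparison[OF _ tendsto_divide_sqrt_Suc[of C]]) (use C in auto)
  then show "S \<longlonglongrightarrow> \<sigma>" by (simp add: LIM_zero_iff)
qed

lemma converges_sqrt_rate_const: "converges_sqrt_rate (\<lambda>_. c) c"
  by (auto simp: converges_sqrt_rate_def intro!: exI[of _ 0])

lemma Cauchy_if_sqrt_tail_bound:
  assumes bound: "\<And>n N. 1 \<le> n \<Longrightarrow> n \<le> N \<Longrightarrow> \<bar>S N - S n\<bar> \<le> C / sqrt (real n + 1)"
  shows "Cauchy S"
proof (rule CauchyI)
  fix e :: real assume "e > 0"
  then obtain M0 where M0: "\<And>n. n \<ge> M0 \<Longrightarrow> \<bar>C / sqrt (real n + 1)\<bar> < e / 2"
    using LIMSEQ_D[OF tendsto_divide_sqrt_Suc, of "e / 2"] by auto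
  define M where "M = max 1 M0"
  show "\<exists>M. \<forall>m\<ge>M. \<forall>n\<ge>M. norm (S m - S n) < e"
  proof (intro exI allI impI)
    fix m n assume "M \<le> m" "M \<le> n"
    then have "\<bar>S m - S M\<bar> \<le> C / sqrt (real M + 1)" "\<bar>S n - S M\<bar> \<le> C / sqrt (real M + 1)"
      using bound[of M] by (auto simp: M_def)
    moreover have "C / sqrt (real M + 1) < e / 2"
      using M0[of M] by (auto simp only: M_def max.cobounded2 abs_less_iff)
    ultimately show "norm (S m - S n) < e"
      unfolding real_norm_def by arith
  qed
qed

lemma converges_sqrt_rate_if_tail_bound:
  assumes bound: "\<And>n N. 1 \<le> n \<Longrightarrow> n \<le> N \<Longrightarrow> \<bar>S N - S n\<bar> \<le> C / sqrt (real n + 1)"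
  shows "\<exists>\<sigma>. converges_sqrt_rate S \<sigma>"
proof -
  obtain \<sigma> where lim: "S \<longlonglongrightarrow> \<sigma>"
    using Cauchy_if_sqrt_tail_bound[OF bound] by (auto simp: Cauchy_convergent_iff convergent_def)
  have tail: "\<bar>S n - \<sigma>\<bar> \<le> C / sqrt (real n + 1)" if "n \<ge> 1" for n
  proof -
    have "(\<lambda>N. \<bar>S N - S n\<bar>) \<longlonglongrightarrow> \<bar>\<sigma> - S n\<bar>"
      by (intro tendsto_intros lim)
    moreover have "\<forall>\<^sub>F N in sequentially. \<bar>S N - S n\<bar> \<le> C / sqrt (real n + 1)"
      using bound that by (auto simp: eventually_sequentially)
    ultimately have "\<bar>\<sigma> - S n\<bar> \<le> C / sqrt (real n + 1)"
      by (rule tendsto_upperbound) simp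
    then show ?thesis by (simp add: abs_minus_commute)
  qed
  define C' where "C' = max C \<bar>S 0 - \<sigma>\<bar>"
  have "\<bar>S n - \<sigma>\<bar> \<le> C' / sqrt (real n + 1)" for n
  proof (cases "n = 0")
    case False
    then have "\<bar>S n - \<sigma>\<bar> \<le> C / sqrt (real n + 1)" using tail by simp
    also have "\<dots> \<le> C' / sqrt (real n + 1)" by (intro divide_right_mono) (auto simp: C'_def)
    finally show ?thesis .
  qed (simp add: C'_def)
  then show ?thesis
    unfolding converges_sqrt_rate_def by blast
qed

lemma inverse_power_three_halves_le:
  assumes "m \<ge> 1"
  shows "1 / (real m * sqrt (real m)) \<le> 4 * (1 / sqrt (real m) - 1 / sqrt (real (Suc m)))"
proof -
  define p q where "p = sqrt (real m)" and "q = sqrt (real (Suc m))"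
  have p: "p \<ge> 1" and pq: "p \<le> q" and q2: "q * q = p * p + 1"
    using assms by (auto simp: p_def q_def)
  have "p * p \<ge> 1" using p by (metis mult_mono' mult_1 zero_le_one)
  moreover have "q * p \<le> q * q" using p pq by (intro mult_left_mono) auto
  ultimately have "q * (q + p) \<le> 4 * (p * p)"
    unfolding distrib_left using q2 by linarith
  then have W: "p * q * (q + p) \<le> 4 * (p * p * p)"
    using mult_left_mono[of _ _ p] p by (fastforce simp: mult_ac)
  have "(q - p) * (q + p) = 1"
    using q2 by (simp add: algebra_simps)
  then have "q - p = 1 / (q + p)"
    using p pq by (simp add: eq_divide_eq)
  have "1 / p - 1 / q = (q - p) / (p * q)"
    using p pq by (simp add: field_simps)
  also have "\<dots> = 1 / (p * q * (q + p))"
    using \<open>q - p = 1 / (q + p)\<close> by simp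
  finally have "1 / p - 1 / q = 1 / (p * q * (q + p))" .
  moreover have "4 / (4 * (p * p * p)) \<le> 4 / (p * q * (q + p))"
    using W p pq by (intro frac_le) auto
  ultimately have "1 / (p * p * p) \<le> 4 * (1 / p - 1 / q)"
    by simp
  then show ?thesis
    by (simp add: p_def q_def)
qed

lemma abs_sum_tail_le_inverse_sqrt:
  assumes d: "\<And>m. m \<ge> 1 \<Longrightarrow> \<bar>d m\<bar> \<le> B / (real m * sqrt (real m))" and n: "1 \<le> n" "n \<le> N"
  shows "\<bar>\<Sum>m\<in>{n<..N}. d m\<bar> \<le> 4 * B / sqrt (real n + 1)"
proof -
  have "B \<ge> 0" using d[of 1] by simp
  have "\<bar>\<Sum>m\<in>{n<..N}. d m\<bar> \<le> (\<Sum>m\<in>{n<..N}. B * (4 * (1 / sqrt (real m) - 1 / sqrt (real (Suc m)))))"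
  proof (intro order.trans[OF sum_abs] sum_mono)
    fix m assume "m \<in> {n<..N}"
    then have "m \<ge> 1" using n by auto
    then have "\<bar>d m\<bar> \<le> B * (1 / (real m * sqrt (real m)))" using d by simp
    also have "\<dots> \<le> B * (4 * (1 / sqrt (real m) - 1 / sqrt (real (Suc m))))"
      using \<open>B \<ge> 0\<close> \<open>m \<ge> 1\<close> by (intro mult_left_mono inverse_power_three_halves_le)
    finally show "\<bar>d m\<bar> \<le> B * (4 * (1 / sqrt (real m) - 1 / sqrt (real (Suc m))))" .
  qed
  also have "\<dots> = B * (4 * (\<Sum>m\<in>{n<..N}. 1 / sqrt (real m) - 1 / sqrt (real (Suc m))))"
    by (simp only: sum_distrib_left)
  also have "(\<Sum>m\<in>{n<..N}. 1 / sqrt (real m) - 1 / sqrt (real (Suc m)))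
      = 1 / sqrt (real (Suc n)) - 1 / sqrt (real (Suc N))"
    using sum_Suc_diff[of "Suc n" N "\<lambda>m. - (1 / sqrt (real m))"] n
    by (simp add: atLeastSucAtMost_greaterThanAtMost[symmetric])
  also have "B * (4 * (1 / sqrt (real (Suc n)) - 1 / sqrt (real (Suc N)))) \<le> B * (4 * (1 / sqrt (real n + 1)))"
    using \<open>B \<ge> 0\<close> by (intro mult_left_mono) (auto simp: add.commute)
  finally show ?thesis by (simp add: mult.commute)
qed

lemma sum_atLeastAtMost_diff_tail:
  fixes n N :: nat
  shows "n \<le> N \<Longrightarrow> (\<Sum>m=1..N. d m) - (\<Sum>m=1..n. d m) = (\<Sum>m\<in>{n<..N}. d m :: real)"
proof -
  assume "n \<le> N"
  then have "{1..N} = {1..n} \<union> {n<..N}" "{1..n} \<inter> {n<..N} = {}" by auto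
  then show ?thesis by (simp add: sum.union_disjoint)
qed

lemma converges_sqrt_rate_partial_sums:
  assumes "\<And>m. m \<ge> 1 \<Longrightarrow> \<bar>d m\<bar> \<le> B / (real m * sqrt (real m))"
  shows "\<exists>\<sigma>. converges_sqrt_rate (\<lambda>N. \<Sum>m=1..N. d m) \<sigma>"
proof (rule converges_sqrt_rate_if_tail_bound[where C = "4 * B"])
  fix n N :: nat assume n: "1 \<le> n" "n \<le> N"
  have "(\<Sum>m=1..N. d m) - (\<Sum>m=1..n. d m) = (\<Sum>m\<in>{n<..N}. d m)"
    using n(2) by (rule sum_atLeastAtMost_diff_tail)
  then show "\<bar>(\<Sum>m=1..N. d m) - (\<Sum>m=1..n. d m)\<bar> \<le> 4 * B / sqrt (real n + 1)"
    using abs_sum_tail_le_inverse_sqrt[OF assms n] by simp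
qed

lemma alternating_sum_bounds:
  fixes a :: "nat \<Rightarrow> real"
  assumes "\<And>m. m \<ge> n \<Longrightarrow> a (Suc m) \<le> a m" "\<And>m. m \<ge> n \<Longrightarrow> 0 \<le> a m"
  shows "0 \<le> (-1) ^ n * (\<Sum>m=n..n+k. (-1) ^ m * a m) \<and> (-1) ^ n * (\<Sum>m=n..n+k. (-1) ^ m * a m) \<le> a n"
  using assms
proof (induction k arbitrary: n)
  case 0
  then show ?case by (simp flip: power_add mult.assoc)
next
  case (Suc k)
  define T where "T = (\<Sum>m=Suc n..Suc n+k. (-1) ^ m * a m)"
  have IH: "0 \<le> (-1) ^ Suc n * T" "(-1) ^ Suc n * T \<le> a (Suc n)"
    using Suc.IH[of "Suc n"] Suc.prems by (auto simp: T_def)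
  have "{n..n + Suc k} = insert n {Suc n..Suc n + k}" by auto
  then have "(-1) ^ n * (\<Sum>m=n..n + Suc k. (-1) ^ m * a m) = a n - (-1) ^ Suc n * T"
    by (simp add: T_def algebra_simps flip: power_add)
  moreover have "a (Suc n) \<le> a n" using Suc.prems by auto
  ultimately show ?case using IH by linarith
qed

lemma abs_alternating_tail_le:
  fixes a :: "nat \<Rightarrow> real"
  assumes "\<And>m. m > n \<Longrightarrow> a (Suc m) \<le> a m" "\<And>m. m > n \<Longrightarrow> 0 \<le> a m" "n \<le> N"
  shows "\<bar>\<Sum>m\<in>{n<..N}. (-1) ^ m * a m\<bar> \<le> a (Suc n)"
proof (cases "N = n")
  case True
  then show ?thesis using assms(2)[of "Suc n"] by simp
next
  case False
  then obtain k where k: "N = Suc n + k" using assms(3) by (metis le_Suc_ex le_neq_implies_less less_eq_Suc_le)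
  then have "{n<..N} = {Suc n..Suc n + k}" by auto
  moreover have "\<bar>(-1) ^ Suc n * x\<bar> = \<bar>x\<bar>" for x :: real by (simp add: abs_mult)
  ultimately show ?thesis
    using alternating_sum_bounds[of "Suc n" a k] assms(1,2) by (metis Suc_le_lessD abs_of_nonneg)
qed

lemma abs_alternating_harm_tail_le:
  assumes "1 \<le> n" "n \<le> N"
  shows "\<bar>\<Sum>m\<in>{n<..N}. (-1) ^ m * (harm (m - 1) / real m)\<bar> \<le> 4 / sqrt (real n + 1)"
proof -
  define sq where "sq = sqrt (real n + 1)"
  have "sq \<ge> 1" by (simp add: sq_def)
  have "\<bar>\<Sum>m\<in>{n<..N}. (-1) ^ m * (harm (m - 1) / real m)\<bar> \<le> harm (Suc n - 1) / real (Suc n)"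
    using assms
    by (intro abs_alternating_tail_le[where a = "\<lambda>m. harm (m - 1) / real m"])
       (auto intro!: divide_nonneg_nonneg harm_nonneg simp: harm_divide_Suc_le[simplified])
  also have "\<dots> = harm n / (sq * sq)"
    by (simp add: sq_def)
  also have "\<dots> \<le> 4 * sq / (sq * sq)"
    using harm_le_sqrt[of n] by (intro divide_right_mono) (auto simp: sq_def)
  also have "\<dots> = 4 / sq"
    using \<open>sq \<ge> 1\<close> by simp
  finally show ?thesis by (simp add: sq_def)
qed

lemma abs_alternating_harmonic_tail_le:
  assumes "1 \<le> n" "n \<le> N"
  shows "\<bar>\<Sum>m\<in>{n<..N}. (-1) ^ m * (1 / real m)\<bar> \<le> 1 / sqrt (real n + 1)"
proof -
  define sq where "sq = sqrt (real n + 1)"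
  have "sq \<ge> 1" by (simp add: sq_def)
  have "\<bar>\<Sum>m\<in>{n<..N}. (-1) ^ m * (1 / real m)\<bar> \<le> 1 / real (Suc n)"
    using assms by (intro abs_alternating_tail_le[where a = "\<lambda>m. 1 / real m"]) (auto simp: frac_le)
  also have "\<dots> = 1 / (sq * sq)"
    by (simp add: sq_def)
  also have "\<dots> \<le> 1 / sq"
    using \<open>sq \<ge> 1\<close> by (intro divide_left_mono) (auto simp: mult_le_cancel_left1)
  finally show ?thesis by (simp add: sq_def)
qed

lemma converges_sqrt_rate_weighted_sum:
  fixes z :: real
  assumes "\<bar>z\<bar> = 1" "k \<ge> 2" and K: "\<And>m. \<bar>K m\<bar> \<le> B * sqrt (real m + 1)"
  shows "\<exists>\<sigma>. converges_sqrt_rate (\<lambda>N. \<Sum>n=1..N. z ^ n / real n ^ k * K (n - 1)) \<sigma>"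
proof (rule converges_sqrt_rate_partial_sums)
  fix m :: nat assume "m \<ge> 1"
  have "B \<ge> 0" using order_trans[OF abs_ge_zero K[of 0]] by simp
  have "real m ^ 2 \<le> real m ^ k" using \<open>m \<ge> 1\<close> assms(2) by (intro power_increasing) auto
  have "\<bar>z ^ m / real m ^ k * K (m - 1)\<bar> = \<bar>K (m - 1)\<bar> / real m ^ k"
    using assms(1) by (simp add: abs_mult power_abs)
  also have "\<dots> \<le> B * sqrt (real m) / real m ^ 2"
    using K[of "m - 1"] \<open>m \<ge> 1\<close> \<open>real m ^ 2 \<le> real m ^ k\<close> \<open>B \<ge> 0\<close>
    by (intro frac_le) (auto simp: of_nat_diff)
  also have "\<dots> = B / (real m * sqrt (real m))"
    using \<open>m \<ge> 1\<close> by (simp add: power2_eq_square field_simps flip: real_sqrt_mult_self[of "real m"])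
  finally show "\<bar>z ^ m / real m ^ k * K (m - 1)\<bar> \<le> B / (real m * sqrt (real m))" .
qed

lemma abs_sqrt_rate_divide_le:
  assumes "\<And>n. \<bar>K n - \<kappa>\<bar> \<le> C / sqrt (real n + 1)" "m \<ge> 1"
  shows "\<bar>(K (m - 1) - \<kappa>) / real m\<bar> \<le> C / (real m * sqrt (real m))"
proof -
  have "\<bar>K (m - 1) - \<kappa>\<bar> / real m \<le> C / sqrt (real m) / real m"
    using assms(1)[of "m - 1"] assms(2) by (intro divide_right_mono) (auto simp: of_nat_diff)
  then show ?thesis
    by (simp add: abs_divide mult.commute)
qed

lemma converges_sqrt_rate_harmonic_weighted:
  assumes "converges_sqrt_rate K \<kappa>"
  shows "\<exists>d. converges_sqrt_rate (\<lambda>N. \<Sum>n=1..N. (K (n - 1) - \<kappa>) / real n) d"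
proof -
  obtain C where "\<And>n. \<bar>K n - \<kappa>\<bar> \<le> C / sqrt (real n + 1)"
    using assms by (auto simp: converges_sqrt_rate_def)
  then show ?thesis
    by (intro converges_sqrt_rate_partial_sums abs_sqrt_rate_divide_le)
qed

lemma converges_sqrt_rate_alternating:
  assumes "converges_sqrt_rate K' \<kappa>'" and K: "\<And>m. K m = c * harm m + K' m"
  shows "\<exists>\<sigma>. converges_sqrt_rate (\<lambda>N. \<Sum>n=1..N. (-1) ^ n / real n * K (n - 1)) \<sigma>"
proof -
  obtain C where C: "\<And>n. \<bar>K' n - \<kappa>'\<bar> \<le> C / sqrt (real n + 1)"
    using assms(1) by (auto simp: converges_sqrt_rate_def)
  show ?thesis
  proof (rule converges_sqrt_rate_if_tail_bound[where C = "4 * \<bar>c\<bar> + \<bar>\<kappa>'\<bar> + 4 * C"])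
    fix n N :: nat assume n: "1 \<le> n" "n \<le> N"
    define sq where "sq = sqrt (real n + 1)"
    define A where "A = (\<Sum>m\<in>{n<..N}. (-1) ^ m * (harm (m - 1) / real m))"
    define Bs where "Bs = (\<Sum>m\<in>{n<..N}. (-1) ^ m * (1 / real m))"
    define E where "E = (\<Sum>m\<in>{n<..N}. (-1) ^ m * ((K' (m - 1) - \<kappa>') / real m))"
    have "(\<Sum>m=1..N. (-1) ^ m / real m * K (m - 1)) - (\<Sum>m=1..n. (-1) ^ m / real m * K (m - 1))
        = (\<Sum>m\<in>{n<..N}. c * ((-1) ^ m * (harm (m - 1) / real m)) + \<kappa>' * ((-1) ^ m * (1 / real m))
            + (-1) ^ m * ((K' (m - 1) - \<kappa>') / real m))"
      unfolding sum_atLeastAtMost_diff_tail[OF n(2)]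
      by (intro sum.cong refl) (simp add: K algebra_simps diff_divide_distrib add_divide_distrib)
    also have "\<dots> = c * A + \<kappa>' * Bs + E"
      by (simp add: A_def Bs_def E_def sum.distrib sum_distrib_left)
    finally have split: "(\<Sum>m=1..N. (-1) ^ m / real m * K (m - 1)) - (\<Sum>m=1..n. (-1) ^ m / real m * K (m - 1))
        = c * A + \<kappa>' * Bs + E" .
    have E: "\<bar>E\<bar> \<le> 4 * C / sq"
      unfolding E_def sq_def using abs_sqrt_rate_divide_le[OF C]
      by (intro abs_sum_tail_le_inverse_sqrt[OF _ n]) (simp add: abs_mult)
    have "\<bar>c * A + \<kappa>' * Bs + E\<bar> \<le> \<bar>c\<bar> * \<bar>A\<bar> + \<bar>\<kappa>'\<bar> * \<bar>Bs\<bar> + \<bar>E\<bar>"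
      by (simp add: abs_mult[symmetric] abs_triangle_ineq order.trans[OF abs_triangle_ineq add_right_mono])
    also have "\<dots> \<le> \<bar>c\<bar> * (4 / sq) + \<bar>\<kappa>'\<bar> * (1 / sq) + 4 * C / sq"
      using abs_alternating_harm_tail_le[OF n] abs_alternating_harmonic_tail_le[OF n] E
      unfolding A_def Bs_def sq_def by (intro add_mono mult_left_mono) auto
    also have "\<dots> = (4 * \<bar>c\<bar> + \<bar>\<kappa>'\<bar> + 4 * C) / sqrt (real n + 1)"
      by (simp add: sq_def field_simps)
    finally show "\<bar>(\<Sum>m=1..N. (-1) ^ m / real m * K (m - 1)) - (\<Sum>m=1..n. (-1) ^ m / real m * K (m - 1))\<bar>
        \<le> (4 * \<bar>c\<bar> + \<bar>\<kappa>'\<bar> + 4 * C) / sqrt (real n + 1)"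
      unfolding split .
  qed
qed

section \<open>Truncated sums of depth at most three\<close>

lemma abs_zeta_trunc_le_harm_power:
  assumes "\<forall>s\<in>set ss. sidx_ok s"
  shows "\<bar>zeta_trunc ss n\<bar> \<le> harm n ^ length ss"
  using assms
proof (induction ss arbitrary: n)
  case (Cons s ss)
  have "\<bar>zeta_trunc (s # ss) n\<bar> \<le> (\<Sum>m=1..n. \<bar>zsgn s ^ m / real m ^ fst s * zeta_trunc ss (m - 1)\<bar>)"
    by (simp only: zeta_trunc.simps sum_abs)
  also have "\<dots> \<le> (\<Sum>m=1..n. inverse (real m) * harm n ^ length ss)"
  proof (intro sum_mono)
    fix m assume m: "m \<in> {1..n}"
    have "real m ^ 1 \<le> real m ^ fst s"
      using m Cons.prems by (intro power_increasing) (auto simp: sidx_ok_def)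
    then have "1 / real m ^ fst s \<le> inverse (real m)"
      using m by (simp add: field_simps)
    moreover have "\<bar>zeta_trunc ss (m - 1)\<bar> \<le> harm (m - 1) ^ length ss"
      using Cons by simp
    moreover have "harm (m - 1) ^ length ss \<le> (harm n :: real) ^ length ss"
      using m by (intro power_mono harm_mono harm_nonneg) auto
    ultimately have "1 / real m ^ fst s * \<bar>zeta_trunc ss (m - 1)\<bar> \<le> inverse (real m) * harm n ^ length ss"
      by (intro mult_mono) auto
    then show "\<bar>zsgn s ^ m / real m ^ fst s * zeta_trunc ss (m - 1)\<bar> \<le> inverse (real m) * harm n ^ length ss"
      by (simp add: abs_mult)
  qed
  also have "\<dots> = harm n ^ length (s # ss)"
    by (simp add: harm_def sum_distrib_right)
  finally show ?case .
qed simp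

lemma abs_zeta_trunc_le_sqrt:
  assumes "\<forall>s\<in>set ss. sidx_ok s" "length ss \<le> 2"
  shows "\<bar>zeta_trunc ss n\<bar> \<le> 17 * sqrt (real n + 1)"
proof -
  have "length ss = 0 \<or> length ss = 1 \<or> length ss = 2"
    using assms(2) by presburger
  moreover have "1 \<le> sqrt (real n + 1)" by simp
  then have "1 \<le> 17 * sqrt (real n + 1)" "harm n \<le> 17 * sqrt (real n + 1)"
    "(harm n)\<^sup>2 \<le> 17 * sqrt (real n + 1)"
    using harm_le_sqrt[of n] harm_squared_le_sqrt[of n] by linarith+
  ultimately have "harm n ^ length ss \<le> 17 * sqrt (real n + 1)"
    by auto
  then show ?thesis using abs_zeta_trunc_le_harm_power[OF assms(1), of n] by simp
qed

lemma zeta_trunc_one: "zeta_trunc [(1, False)] N = harm N"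
  by (simp add: harm_def zsgn_def inverse_eq_divide)

lemma zeta_trunc_one_Cons: "zeta_trunc ((1, False) # ss) m = (\<Sum>n=1..m. zeta_trunc ss (n - 1) / real n)"
  by (simp add: zsgn_def)

lemma zeta_trunc_one_Cons_split:
  "zeta_trunc ((1, False) # ss) m = \<kappa> * harm m + (\<Sum>n=1..m. (zeta_trunc ss (n - 1) - \<kappa>) / real n)"
  unfolding zeta_trunc_one_Cons
  by (simp add: harm_def sum_distrib_left inverse_eq_divide diff_divide_distrib flip: sum.distrib)

lemma zeta_trunc_one_one: "zeta_trunc [(1, False), (1, False)] N = ((harm N)\<^sup>2 - zeta_trunc [(2, False)] N) / 2"
proof (induction N)
  case (Suc N)
  have step11: "zeta_trunc [(1, False), (1, False)] (Suc N) = zeta_trunc [(1, False), (1, False)] N + harm N / real (Suc N)"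
    using zeta_trunc_one_Cons[of "[(1, False)]" "Suc N"] zeta_trunc_one_Cons[of "[(1, False)]" N]
    by (simp add: zeta_trunc_one[unfolded One_nat_def] del: zeta_trunc.simps)
  have step2: "zeta_trunc [(2, False)] (Suc N) = zeta_trunc [(2, False)] N + 1 / (real (Suc N))\<^sup>2"
    by (simp add: zsgn_def)
  have step_harm: "harm (Suc N) = harm N + 1 / real (Suc N)"
    by (simp add: harm_Suc inverse_eq_divide)
  have "(h\<^sup>2 - Z) / 2 + h / x = ((h + 1 / x)\<^sup>2 - (Z + 1 / x\<^sup>2)) / 2" if "x \<noteq> 0" for h Z x :: real
    using that by (simp add: field_simps power2_eq_square)
  then show ?case
    unfolding step11 step2 step_harm Suc.IH by simp
qed (simp add: harm_def)

lemma zeta_trunc_Cons_fun: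
  "zeta_trunc (s # ss) = (\<lambda>N. \<Sum>n=1..N. zsgn s ^ n / real n ^ fst s * zeta_trunc ss (n - 1))"
  by (simp add: fun_eq_iff)

lemma converges_sqrt_rate_zeta_trunc_Cons:
  assumes "fst s \<ge> 2" "\<forall>x\<in>set ss. sidx_ok x" "length ss \<le> 2"
  shows "\<exists>\<sigma>. converges_sqrt_rate (zeta_trunc (s # ss)) \<sigma>"
  unfolding zeta_trunc_Cons_fun
  using abs_zeta_trunc_le_sqrt[OF assms(2,3)]
  by (intro converges_sqrt_rate_weighted_sum[OF abs_zsgn assms(1)])

lemma converges_sqrt_rate_zeta_trunc_one_bar_Cons:
  assumes "converges_sqrt_rate K' \<kappa>'" "\<And>m. zeta_trunc ss m = c * harm m + K' m"
  shows "\<exists>\<sigma>. converges_sqrt_rate (zeta_trunc ((1, True) # ss)) \<sigma>"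
proof -
  have "zeta_trunc ((1, True) # ss) = (\<lambda>N. \<Sum>n=1..N. (-1) ^ n / real n * zeta_trunc ss (n - 1))"
    by (simp add: fun_eq_iff zsgn_def)
  then show ?thesis
    using converges_sqrt_rate_alternating[OF assms] by simp
qed

lemma converges_sqrt_rate_zeta_trunc_depth1:
  assumes "sidx_ok c" "c \<noteq> (1, False)"
  shows "\<exists>\<kappa>. converges_sqrt_rate (zeta_trunc [c]) \<kappa>"
proof (cases "fst c \<ge> 2")
  case True
  then show ?thesis by (intro converges_sqrt_rate_zeta_trunc_Cons) auto
next
  case False
  then have "c = (1, True)" using assms by (cases c) (auto simp: sidx_ok_def)
  moreover have "zeta_trunc [] m = 0 * harm m + 1" for m by simp
  ultimately show ?thesis
    using converges_sqrt_rate_zeta_trunc_one_bar_Cons[OF converges_sqrt_rate_const] by blast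
qed

lemma converges_sqrt_rate_zeta_trunc_depth2:
  assumes "sidx_ok b" "sidx_ok c" "b \<noteq> (1, False)" "(b, c) \<noteq> ((1, True), (1, False))"
  shows "\<exists>\<kappa>. converges_sqrt_rate (zeta_trunc [b, c]) \<kappa>"
proof (cases "fst b \<ge> 2")
  case True
  then show ?thesis using assms by (intro converges_sqrt_rate_zeta_trunc_Cons) auto
next
  case False
  then have b: "b = (1, True)" using assms by (cases b) (auto simp: sidx_ok_def)
  then obtain \<kappa> where "converges_sqrt_rate (zeta_trunc [c]) \<kappa>"
    using converges_sqrt_rate_zeta_trunc_depth1 assms by blast
  moreover have "zeta_trunc [c] m = 0 * harm m + zeta_trunc [c] m" for m by simp
  ultimately show ?thesis
    unfolding b by (rule converges_sqrt_rate_zeta_trunc_one_bar_Cons)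
qed

lemma convergent_zeta_trunc_depth3:
  assumes "sidx_ok a" "sidx_ok b" "sidx_ok c" "a \<noteq> (1, False)" "fst a + fst b + fst c \<ge> 4"
  shows "convergent (zeta_trunc [a, b, c])"
proof -
  have "\<exists>\<sigma>. converges_sqrt_rate (zeta_trunc [a, b, c]) \<sigma>"
  proof (cases "fst a \<ge> 2")
    case True
    then show ?thesis using assms by (intro converges_sqrt_rate_zeta_trunc_Cons) auto
  next
    case False
    then have a: "a = (1, True)" using assms by (cases a) (auto simp: sidx_ok_def)
    show ?thesis
    proof (cases "b = (1, False)")
      case True
      then have "c \<noteq> (1, False)" using assms a by auto
      then obtain \<kappa> where "converges_sqrt_rate (zeta_trunc [c]) \<kappa>"
        using converges_sqrt_rate_zeta_trunc_depth1 assms by blast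
      then obtain j where "converges_sqrt_rate (\<lambda>N. \<Sum>n=1..N. (zeta_trunc [c] (n - 1) - \<kappa>) / real n) j"
        using converges_sqrt_rate_harmonic_weighted by blast
      moreover have "zeta_trunc [b, c] m = \<kappa> * harm m + (\<Sum>n=1..m. (zeta_trunc [c] (n - 1) - \<kappa>) / real n)" for m
        unfolding True by (rule zeta_trunc_one_Cons_split)
      ultimately show ?thesis
        unfolding a by (rule converges_sqrt_rate_zeta_trunc_one_bar_Cons)
    next
      case False
      moreover have "(b, c) \<noteq> ((1, True), (1, False))" using assms a by auto
      ultimately obtain \<kappa> where "converges_sqrt_rate (zeta_trunc [b, c]) \<kappa>"
        using converges_sqrt_rate_zeta_trunc_depth2 assms by blast
      moreover have "zeta_trunc [b, c] m = 0 * harm m + zeta_trunc [b, c] m" for m by simp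
      ultimately show ?thesis
        unfolding a by (rule converges_sqrt_rate_zeta_trunc_one_bar_Cons)
    qed
  qed
  then show ?thesis
    using converges_sqrt_rate_LIMSEQ convergent_def by blast
qed

lemma LIMSEQ_euler_sum: "convergent (zeta_trunc ss) \<Longrightarrow> zeta_trunc ss \<longlonglongrightarrow> euler_sum ss"
  by (simp add: euler_sum_def convergent_LIMSEQ_iff)

lemma LIMSEQ_euler_sum_two: "zeta_trunc [(2, False)] \<longlonglongrightarrow> euler_sum [(2, False)]"
proof (rule LIMSEQ_euler_sum)
  obtain \<kappa> where "converges_sqrt_rate (zeta_trunc [(2, False)]) \<kappa>"
    using converges_sqrt_rate_zeta_trunc_depth1[of "(2, False)"] by (auto simp: sidx_ok_def)
  then show "convergent (zeta_trunc [(2, False)])"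
    using converges_sqrt_rate_LIMSEQ convergent_def by blast
qed

section \<open>Regularised values from an expansion of the truncated sums\<close>

lemma zeta_star_of_decomposition:
  assumes dec: "\<And>N. zeta_trunc ss N = \<kappa> * zeta_trunc [(1, False), (1, False)] N + j * harm N + D N"
    and "D \<longlonglongrightarrow> d"
  shows "zeta_star ss = [:d - \<kappa> * euler_sum [(2, False)] / 2, j, \<kappa> / 2:]"
proof (rule zeta_star_eqI)
  define z2 L where "z2 = euler_sum [(2, False)]" and "L M = ln (real M) + euler_mascheroni" for M
  define R where "R M = \<kappa> * (((harm M)\<^sup>2 - (L M)\<^sup>2 - (zeta_trunc [(2, False)] M - z2)) / 2)
    + j * (harm M - L M) + (D M - d)" for M
  have "R \<longlonglongrightarrow> \<kappa> * ((0 - (z2 - z2)) / 2) + j * 0 + (d - d)"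
    unfolding R_def L_def z2_def
    by (intro tendsto_intros harm_minus_ln_LIMSEQ harm_squared_minus_ln_squared_LIMSEQ LIMSEQ_euler_sum_two assms(2))
       simp
  then have "R \<longlonglongrightarrow> 0" by simp
  moreover have "zeta_trunc ss M - poly [:d - \<kappa> * z2 / 2, j, \<kappa> / 2:] (L M) = R M" for M
    unfolding dec zeta_trunc_one_one R_def
    by (simp add: power2_eq_square algebra_simps add_divide_distrib diff_divide_distrib)
  ultimately show "(\<lambda>M. zeta_trunc ss M - poly [:d - \<kappa> * euler_sum [(2, False)] / 2, j, \<kappa> / 2:]
      (ln (real M) + euler_mascheroni)) \<longlonglongrightarrow> 0"
    by (simp add: L_def z2_def)
qed

lemma iter_int_forms_of_decomposition:
  assumes ok: "\<forall>s\<in>set ss. sidx_ok s"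
    and dec: "\<And>N. zeta_trunc ss N = \<kappa> * zeta_trunc [(1, False), (1, False)] N + j * harm N + D N"
    and e: "0 < e" "e < 1"
  shows "iter_int (forms ss) (1 - e) = e * (\<Sum>N. D N * (1 - e) ^ N) + \<kappa> * ((ln e)\<^sup>2 / 2) - j * ln e"
proof -
  define G where "G ts = (\<Sum>N. zeta_trunc ts N * (1 - e) ^ N)" for ts
  define GH where "GH = (\<Sum>N. harm N * (1 - e) ^ N)"
  have G: "iter_int (forms ts) (1 - e) = e * G ts" if "\<forall>s\<in>set ts. sidx_ok s" for ts
    using iter_int_forms[OF that, of "1 - e"] e by (simp add: G_def)
  have GH: "iter_int (forms [(1, False)]) (1 - e) = e * GH"
    using G[of "[(1, False)]"] unfolding G_def GH_def zeta_trunc_one by (simp add: sidx_ok_def)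
  have "\<bar>1 - e\<bar> < 1" using e by simp
  then have "(\<lambda>N. zeta_trunc ss N * (1 - e) ^ N - \<kappa> * (zeta_trunc [(1, False), (1, False)] N * (1 - e) ^ N)
      - j * (harm N * (1 - e) ^ N)) sums (G ss - \<kappa> * G [(1, False), (1, False)] - j * GH)"
    unfolding G_def GH_def
    using summable_zeta_trunc_powser[of _ "[(1, False)]"] unfolding zeta_trunc_one
    by (intro sums_diff sums_mult summable_sums summable_zeta_trunc_powser)
  moreover have "zeta_trunc ss N * (1 - e) ^ N - \<kappa> * (zeta_trunc [(1, False), (1, False)] N * (1 - e) ^ N)
      - j * (harm N * (1 - e) ^ N) = D N * (1 - e) ^ N" for N
    unfolding dec by (simp add: algebra_simps del: zeta_trunc.simps)
  ultimately have D_sum: "(\<Sum>N. D N * (1 - e) ^ N) = G ss - \<kappa> * G [(1, False), (1, False)] - j * GH"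
    by (simp add: sums_iff del: zeta_trunc.simps)
  have "iter_int (forms ss) (1 - e) = e * G ss"
    using G ok by blast
  also have "\<dots> = e * (\<Sum>N. D N * (1 - e) ^ N) + \<kappa> * (e * G [(1, False), (1, False)]) + j * (e * GH)"
    unfolding D_sum by (simp add: algebra_simps)
  also have "\<dots> = e * (\<Sum>N. D N * (1 - e) ^ N) + \<kappa> * iter_int (forms [(1, False), (1, False)]) (1 - e)
      + j * iter_int (forms [(1, False)]) (1 - e)"
    unfolding GH by (simp add: G sidx_ok_def del: zeta_trunc.simps)
  also have "\<dots> = e * (\<Sum>N. D N * (1 - e) ^ N) + \<kappa> * ((ln e)\<^sup>2 / 2) - j * ln e"
    using iter_int_forms_one[of "1 - e"] iter_int_forms_one_one[of "1 - e"] e by simp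
  finally show ?thesis .
qed

lemma zeta_sh_of_decomposition:
  assumes "\<forall>s\<in>set ss. sidx_ok s"
    and "\<And>N. zeta_trunc ss N = \<kappa> * zeta_trunc [(1, False), (1, False)] N + j * harm N + D N"
    and "D \<longlonglongrightarrow> d"
  shows "zeta_sh ss = [:d, j, \<kappa> / 2:]"
proof (rule zeta_sh_eqI)
  have "\<forall>\<^sub>F e in at_right 0. e * (\<Sum>N. D N * (1 - e) ^ N) - d
      = iter_int (forms ss) (1 - e) - poly [:d, j, \<kappa> / 2:] (- ln e)"
    unfolding eventually_at_right_field
    using iter_int_forms_of_decomposition[OF assms(1,2)]
    by (intro exI[of _ 1]) (auto simp: power2_eq_square algebra_simps)
  moreover have "((\<lambda>e. e * (\<Sum>N. D N * (1 - e) ^ N) - d) \<longlongrightarrow> 0) (at_right 0)"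
    using Abel_mean_tendsto[OF assms(3)] by (simp add: LIM_zero)
  ultimately show "((\<lambda>e. iter_int (forms ss) (1 - e) - poly [:d, j, \<kappa> / 2:] (- ln e)) \<longlongrightarrow> 0) (at_right 0)"
    by (simp add: Lim_transform_eventually)
qed

definition zeta_trunc_expansion :: "sidx list \<Rightarrow> real \<Rightarrow> real \<Rightarrow> bool" where
  "zeta_trunc_expansion ss \<kappa> j \<longleftrightarrow>
     convergent (\<lambda>N. zeta_trunc ss N - \<kappa> * zeta_trunc [(1, False), (1, False)] N - j * harm N)"

lemma zeta_sh_eq_zeta_star_if_expansion:
  assumes "\<forall>s\<in>set ss. sidx_ok s" "zeta_trunc_expansion ss \<kappa> j"
  shows "zeta_sh ss = zeta_star ss + [:\<kappa> / 2 * euler_sum [(2, False)]:]"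
proof -
  define D where "D N = zeta_trunc ss N - \<kappa> * zeta_trunc [(1, False), (1, False)] N - j * harm N" for N
  have "convergent D"
    using assms(2) unfolding zeta_trunc_expansion_def D_def[abs_def] .
  then obtain d where "D \<longlonglongrightarrow> d"
    by (auto simp: convergent_def)
  moreover have dec: "zeta_trunc ss N = \<kappa> * zeta_trunc [(1, False), (1, False)] N + j * harm N + D N" for N
    by (simp add: D_def)
  ultimately show ?thesis
    using zeta_sh_of_decomposition[OF assms(1) dec] zeta_star_of_decomposition[OF dec] by simp
qed

lemma zeta_trunc_expansion_depth3:
  assumes "sidx_ok a" "sidx_ok b" "sidx_ok c" "fst a + fst b + fst c \<ge> 4" "\<not> (a = (1, False) \<and> b = (1, False))"
  shows "\<exists>j. zeta_trunc_expansion [a, b, c] 0 j"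
proof (cases "a = (1, False)")
  case True
  then have "b \<noteq> (1, False)" "(b, c) \<noteq> ((1, True), (1, False))" using assms by auto
  then obtain \<kappa> where "converges_sqrt_rate (zeta_trunc [b, c]) \<kappa>"
    using converges_sqrt_rate_zeta_trunc_depth2 assms by blast
  then obtain d where "converges_sqrt_rate (\<lambda>N. \<Sum>n=1..N. (zeta_trunc [b, c] (n - 1) - \<kappa>) / real n) d"
    using converges_sqrt_rate_harmonic_weighted by blast
  then have "convergent (\<lambda>N. \<Sum>n=1..N. (zeta_trunc [b, c] (n - 1) - \<kappa>) / real n)"
    using converges_sqrt_rate_LIMSEQ convergent_def by blast
  moreover have "zeta_trunc [a, b, c] N - 0 * zeta_trunc [(1, False), (1, False)] N - \<kappa> * harm N
      = (\<Sum>n=1..N. (zeta_trunc [b, c] (n - 1) - \<kappa>) / real n)" for N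
    unfolding True zeta_trunc_one_Cons_split[of _ _ \<kappa>] by simp
  ultimately have "zeta_trunc_expansion [a, b, c] 0 \<kappa>"
    unfolding zeta_trunc_expansion_def by presburger
  then show ?thesis ..
next
  case False
  then have "convergent (zeta_trunc [a, b, c])"
    using assms by (intro convergent_zeta_trunc_depth3)
  then have "zeta_trunc_expansion [a, b, c] 0 0"
    by (simp add: zeta_trunc_expansion_def del: zeta_trunc.simps)
  then show ?thesis ..
qed

lemma zeta_trunc_expansion_one_one:
  assumes "sidx_ok c" "fst c \<ge> 2"
  shows "\<exists>j. zeta_trunc_expansion [(1, False), (1, False), c] (euler_sum [c]) j"
proof -
  obtain \<kappa> where \<kappa>: "converges_sqrt_rate (zeta_trunc [c]) \<kappa>"
    using converges_sqrt_rate_zeta_trunc_depth1 assms by fastforce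
  have "euler_sum [c] = \<kappa>"
    using converges_sqrt_rate_LIMSEQ[OF \<kappa>] unfolding euler_sum_def by (rule limI)
  define J where "J N = (\<Sum>n=1..N. (zeta_trunc [c] (n - 1) - \<kappa>) / real n)" for N
  obtain j where "converges_sqrt_rate J j"
    using converges_sqrt_rate_harmonic_weighted[OF \<kappa>] unfolding J_def[abs_def] by blast
  define D where "D N = (\<Sum>n=1..N. (J (n - 1) - j) / real n)" for N
  obtain d where "converges_sqrt_rate D d"
    using converges_sqrt_rate_harmonic_weighted[OF \<open>converges_sqrt_rate J j\<close>] unfolding D_def[abs_def] by blast
  have "zeta_trunc [(1, False), (1, False), c] N = \<kappa> * zeta_trunc [(1, False), (1, False)] N + j * harm N + D N"
    for N
  proof -
    have "zeta_trunc [(1, False), (1, False), c] N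
        = (\<Sum>n=1..N. \<kappa> * (harm (n - 1) / real n) + (j / real n + (J (n - 1) - j) / real n))"
      unfolding zeta_trunc_one_Cons[of "[(1, False), c]"] zeta_trunc_one_Cons_split[of "[c]" _ \<kappa>] J_def
      by (simp add: add_divide_distrib diff_divide_distrib)
    also have "\<dots> = \<kappa> * zeta_trunc [(1, False), (1, False)] N + j * harm N + D N"
      unfolding zeta_trunc_one_Cons[of "[(1, False)]"] zeta_trunc_one D_def
      by (simp add: sum.distrib sum_distrib_left harm_def inverse_eq_divide)
    finally show ?thesis .
  qed
  then have "(\<lambda>N. zeta_trunc [(1, False), (1, False), c] N - euler_sum [c] * zeta_trunc [(1, False), (1, False)] N
      - j * harm N) = D"
    using \<open>euler_sum [c] = \<kappa>\<close> by (simp add: fun_eq_iff del: zeta_trunc.simps)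
  moreover have "convergent D"
    using converges_sqrt_rate_LIMSEQ[OF \<open>converges_sqrt_rate D d\<close>] convergent_def by blast
  ultimately have "zeta_trunc_expansion [(1, False), (1, False), c] (euler_sum [c]) j"
    unfolding zeta_trunc_expansion_def by simp
  then show ?thesis ..
qed

theorem lemma5p1:
  fixes a b c :: sidx and w :: nat
  assumes "sidx_ok a" and "sidx_ok b" and "sidx_ok c"
    and "w = fst a + fst b + fst c" and "w \<ge> 4"
  shows "(\<not> (a = (1, False) \<and> b = (1, False)) \<longrightarrow> zeta_sh [a, b, c] = zeta_star [a, b, c])
    \<and> (a = (1, False) \<and> b = (1, False) \<and> (c = (w - 2, False) \<or> c = (w - 2, True)) \<longrightarrow>
         zeta_sh [a, b, c] = zeta_star [a, b, c]
           + [: 1 / 2 * euler_sum [(2, False)] * euler_sum [c] :])"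
proof -
  have ok: "\<forall>s\<in>set [a, b, c]. sidx_ok s" using assms(1-3) by simp
  have w: "fst a + fst b + fst c \<ge> 4" using assms(4,5) by simp
  show ?thesis
  proof (intro conjI impI)
    assume "\<not> (a = (1, False) \<and> b = (1, False))"
    then obtain j where "zeta_trunc_expansion [a, b, c] 0 j"
      using zeta_trunc_expansion_depth3 assms(1-3) w by blast
    from zeta_sh_eq_zeta_star_if_expansion[OF ok this]
    show "zeta_sh [a, b, c] = zeta_star [a, b, c]" by simp
  next
    assume "a = (1, False) \<and> b = (1, False) \<and> (c = (w - 2, False) \<or> c = (w - 2, True))"
    \<comment> \<open>the condition on c merely restates fst c = w - 2\<close>
    then have "a = (1, False)" "b = (1, False)" "fst c \<ge> 2" using w by auto
    then obtain j where "zeta_trunc_expansion [a, b, c] (euler_sum [c]) j"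
      using zeta_trunc_expansion_one_one assms(3) by blast
    from zeta_sh_eq_zeta_star_if_expansion[OF ok this]
    show "zeta_sh [a, b, c] = zeta_star [a, b, c] + [: 1 / 2 * euler_sum [(2, False)] * euler_sum [c] :]"
      by (simp add: mult_ac)
  qed
qed

end
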